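(* The following is a deductive theorem of impredicative second-order logic, for one-place predicates $P_1,P_2$ and two-place relations $\varepsilon_1,\varepsilon_2$: $$\big(\mathsf{LT}(P_1,\varepsilon_1)\wedge \Sigma x\,P_1(x)\wedge\mathsf{LT}(P_2,\varepsilon_2)\wedge\Sigma x\,P_2(x)\big)\to\exists R\Big(\forall v\forall y(R(v,y)\to(P_1(v)\wedge P_2(y)))\wedge\forall v(P_1(v)\to\exists! y\,R(v,y))\wedge\forall y(P_2(y)\to\exists! v\,R(v,y))\wedge\forall v\forall y\forall x\forall z((R(v,y)\wedge R(x,z))\to(v\,\varepsilon_1\,x\leftrightarrow y\,\varepsilon_2\,z))\Big).$$
   Context: For a predicate $P$ and relation $\varepsilon$, define $a\subseteq_\varepsilon b$ as $\forall x(x\,\varepsilon\,a\to x\,\varepsilon\,b)$; $b=\mathrm{pot}_\varepsilon(a)$ as $\forall x(x\,\varepsilon\,b\leftrightarrow\exists c(x\subseteq_\varepsilon c\wedge c\,\varepsilon\,a))$; $h$ is an $\varepsilon$-history iff for every $x$ with $x\,\varepsilon\,h$, $x=\mathrm{pot}_\varepsilon(x\cap_\varepsilon h)$ (where $x\cap_\varepsilon h$ is the $\varepsilon$-set of things $\varepsilon$-in both); $s$ is an $\varepsilon$-level iff $s=\mathrm{pot}_\varepsilon(h)$ for some $\varepsilon$-history $h$. Then $\mathsf{LT}(P,\varepsilon)$ is the conjunction of: (i) $\forall a\forall b((P(a)\wedge P(b)\wedge\forall x(x\,\varepsilon\,a\leftrightarrow x\,\varepsilon\,b))\to a=b)$;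 (ii) $\forall F\forall a(P(a)\to\exists b(P(b)\wedge\forall x(x\,\varepsilon\,b\leftrightarrow(F(x)\wedge x\,\varepsilon\,a))))$; (iii) $\forall a(P(a)\to\exists s(s\text{ is an }\varepsilon\text{-level}\wedge a\subseteq_\varepsilon s))$; (iv) $\forall x\forall y(x\,\varepsilon\,y\to(P(x)\wedge P(y)))$. For a formula $\Phi$, $\Sigma x\,\Phi(x)$ abbreviates $\exists P(\forall x\,\Phi(P(x))\wedge\forall y(\Phi(y)\to\exists!x\,P(x)=y))$, where $P$ is a second-order function variable (a bijection between the universe and the $\Phi$s). *)

theory Defs
  imports Main
begin

text \<open>The universe of first-order quantifiers is a type 'a; second-order quantifiers
range over all predicates/relations/functions on 'a (standard semantics).
The membership relation is written eps x y, meaning x eps y.\<close>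

definition esub :: "('a \<Rightarrow> 'a \<Rightarrow> bool) \<Rightarrow> 'a \<Rightarrow> 'a \<Rightarrow> bool" where
  "esub eps a b \<longleftrightarrow> (\<forall>x. eps x a \<longrightarrow> eps x b)"

text \<open>is_pot eps b A: b = pot(A), where A is given by a condition on the
elements c (e.g. A c = eps c a, or A c = eps c x \<and> eps c h for x \<inter> h).\<close>
definition is_pot :: "('a \<Rightarrow> 'a \<Rightarrow> bool) \<Rightarrow> 'a \<Rightarrow> ('a \<Rightarrow> bool) \<Rightarrow> bool" where
  "is_pot eps b A \<longleftrightarrow> (\<forall>x. eps x b \<longleftrightarrow> (\<exists>c. esub eps x c \<and> A c))"

definition is_history :: "('a \<Rightarrow> 'a \<Rightarrow> bool) \<Rightarrow> 'a \<Rightarrow> bool" where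
  "is_history eps h \<longleftrightarrow> (\<forall>x. eps x h \<longrightarrow> is_pot eps x (\<lambda>c. eps c x \<and> eps c h))"

definition is_level :: "('a \<Rightarrow> 'a \<Rightarrow> bool) \<Rightarrow> 'a \<Rightarrow> bool" where
  "is_level eps s \<longleftrightarrow> (\<exists>h. is_history eps h \<and> is_pot eps s (\<lambda>c. eps c h))"

definition LT :: "('a \<Rightarrow> bool) \<Rightarrow> ('a \<Rightarrow> 'a \<Rightarrow> bool) \<Rightarrow> bool" where
  "LT P eps \<longleftrightarrow>
     (\<forall>a b. P a \<and> P b \<and> (\<forall>x. eps x a \<longleftrightarrow> eps x b) \<longrightarrow> a = b) \<and>
     (\<forall>F a. P a \<longrightarrow> (\<exists>b. P b \<and> (\<forall>x. eps x b \<longleftrightarrow> (F x \<and> eps x a)))) \<and>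
     (\<forall>a. P a \<longrightarrow> (\<exists>s. is_level eps s \<and> esub eps a s)) \<and>
     (\<forall>x y. eps x y \<longrightarrow> P x \<and> P y)"

definition Sigma_pred :: "('a \<Rightarrow> bool) \<Rightarrow> bool" where
  "Sigma_pred Phi \<longleftrightarrow> (\<exists>f :: 'a \<Rightarrow> 'a. (\<forall>x. Phi (f x)) \<and> (\<forall>y. Phi y \<longrightarrow> (\<exists>!x. f x = y)))"

end

theory Submission
  imports Defs
begin

text \<open>Under \<open>\<Sigma>x P(x)\<close> the predicate \<open>P\<close> of a level theory holds of everything: otherwise every
\<open>P\<close>-object would be empty, so there would be at most one of them. Both structures are then
full models of level theory, in which membership is well-founded on pots and the levels are
linearly ordered by membership. The relation \<open>R\<close> is the least bisimulation, defined by
recursion on membership: \<open>v\<close> and \<open>y\<close> correspond if every member of either is matched by a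
member of the other. It is a partial isomorphism that carries levels to levels. If neither
side of \<open>R\<close> were total, the least unmatched levels on the two sides would be matched to each
other. If only the domain were total, the whole first universe would be mapped injectively
into the members of one unmatched level, and separation would turn this into an injection of
the power set of the universe into the universe, contradicting Cantor's theorem.\<close>

lemma LT_Sigma_pred_universal:
  assumes LT: "LT P e" and Sigma: "Sigma_pred P"
  shows "P x"
proof (rule ccontr)
  assume nP: "\<not> P x"
  have field: "\<And>x y. e x y \<Longrightarrow> P x \<and> P y" using LT unfolding LT_def by blast
  txt \<open>The non-\<open>P\<close> object \<open>x\<close> has no members, so it would lie in every nonempty level.\<close>
  have empty: "\<not> e z a" if "P a" for a z
  proof
    assume "e z a"
    from LT \<open>P a\<close> obtain s where "is_level e s" "esub e a s" unfolding LT_def by blast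
    then obtain h where h: "is_pot e s (\<lambda>c. e c h)" unfolding is_level_def by blast
    have "e z s" using \<open>esub e a s\<close> \<open>e z a\<close> by (simp add: esub_def)
    then obtain c where "e c h" using h unfolding is_pot_def by blast
    moreover have "esub e x c" using field nP unfolding esub_def by blast
    ultimately have "e x s" using h unfolding is_pot_def by blast
    then show False using field nP by blast
  qed
  from Sigma obtain g :: "'a \<Rightarrow> 'a" where g: "\<And>x. P (g x)" "\<And>y. P y \<Longrightarrow> \<exists>!x. g x = y"
    unfolding Sigma_pred_def by blast
  have "\<forall>a b. P a \<and> P b \<and> (\<forall>x. e x a \<longleftrightarrow> e x b) \<longrightarrow> a = b"
    using LT unfolding LT_def by blast
  then have "g x = g (g x)" using g(1) empty by blast
  then have "x = g x" using g by metis
  then show False using g(1) nP by metis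
qed

lemma not_inj_set_to_elem: "\<not> inj (G :: 'a set \<Rightarrow> 'a)"
proof
  assume "inj G"
  then have "range (inv G) = Pow UNIV" using inj_imp_surj_inv by fastforce
  then show False using Cantors_theorem by blast
qed

locale level_theory =
  fixes e :: "'a \<Rightarrow> 'a \<Rightarrow> bool"
  assumes extensional: "(\<And>x. e x a \<longleftrightarrow> e x b) \<Longrightarrow> a = b"
    and separation: "\<exists>b. \<forall>x. e x b \<longleftrightarrow> F x \<and> e x a"
    and below_level: "\<exists>s. is_level e s \<and> esub e a s"
begin

lemma pot_minimal:
  assumes "S s0" and pots: "\<And>c. S c \<Longrightarrow> \<exists>A. is_pot e c A"
  shows "\<exists>m. S m \<and> (\<forall>d. S d \<longrightarrow> \<not> e d m)"
proof (rule ccontr)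
  assume "\<not> ?thesis"
  then have no_min: "\<And>m. S m \<Longrightarrow> \<exists>d. S d \<and> e d m" by blast
  txt \<open>Russell's set \<open>r\<close> of the non-self-members of \<open>s0\<close> lying in every element of \<open>S\<close> would
    itself lie in every element \<open>c\<close> of \<open>S\<close>, as \<open>c\<close> is a pot with a member \<open>d \<in> S\<close> and \<open>r \<subseteq> d\<close>.\<close>
  obtain r where r: "\<forall>x. e x r \<longleftrightarrow> ((\<forall>c. S c \<longrightarrow> e x c) \<and> \<not> e x x) \<and> e x s0"
    using separation[of "\<lambda>x. (\<forall>c. S c \<longrightarrow> e x c) \<and> \<not> e x x" s0] by blast
  have r_in: "e r c" if "S c" for c
  proof -
    obtain d where d: "S d" "e d c" using no_min \<open>S c\<close> by blast
    obtain A where A: "is_pot e c A" using pots \<open>S c\<close> by blast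
    then obtain c' where c': "esub e d c'" "A c'" using d(2) unfolding is_pot_def by blast
    have "esub e r d" using r d(1) unfolding esub_def by blast
    then have "esub e r c'" using c'(1) unfolding esub_def by blast
    then show ?thesis using A c'(2) unfolding is_pot_def by blast
  qed
  then have "e r s0" using \<open>S s0\<close> .
  then show False using r r_in by blast
qed

lemma pot_induct:
  assumes "S c"
    and pots: "\<And>c. S c \<Longrightarrow> \<exists>A. is_pot e c A"
    and step: "\<And>c. S c \<Longrightarrow> (\<And>d. S d \<Longrightarrow> e d c \<Longrightarrow> Q d) \<Longrightarrow> Q c"
  shows "Q c"
proof (rule ccontr)
  assume "\<not> Q c"
  then obtain m where "S m" "\<not> Q m" "\<forall>d. S d \<and> \<not> Q d \<longrightarrow> \<not> e d m"
    using pot_minimal[of "\<lambda>x. S x \<and> \<not> Q x" c] pots \<open>S c\<close> by blast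
  then show False using step[of m] by blast
qed

lemma history_member_subset:
  assumes h: "is_history e h" and "e c h" "e d c" "e d h"
  shows "esub e d c"
proof -
  have "\<forall>d. e d c \<longrightarrow> e d h \<longrightarrow> esub e d c"
    using \<open>e c h\<close>
  proof (rule pot_induct[where S="\<lambda>c. e c h"])
    show "\<exists>A. is_pot e c A" if "e c h" for c using h that unfolding is_history_def by blast
  next
    fix c assume "e c h"
      and IH: "\<And>d. e d h \<Longrightarrow> e d c \<Longrightarrow> \<forall>x. e x d \<longrightarrow> e x h \<longrightarrow> esub e x d"
    have pot_c: "is_pot e c (\<lambda>x. e x c \<and> e x h)" using h \<open>e c h\<close> unfolding is_history_def by blast
    show "\<forall>d. e d c \<longrightarrow> e d h \<longrightarrow> esub e d c"
    proof (intro allI impI)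
      fix d assume d: "e d c" "e d h"
      show "esub e d c" unfolding esub_def
      proof (intro allI impI)
        fix z assume "e z d"
        have "is_pot e d (\<lambda>x. e x d \<and> e x h)" using h d(2) unfolding is_history_def by blast
        then obtain f where f: "esub e z f" "e f d" "e f h" using \<open>e z d\<close> unfolding is_pot_def by blast
        have "esub e f d" using IH[OF d(2,1)] f(2,3) by blast
        then have "esub e z d" using f(1) unfolding esub_def by blast
        then show "e z c" using pot_c d unfolding is_pot_def by blast
      qed
    qed
  qed
  then show ?thesis using assms(3,4) by blast
qed

lemma history_member_transitive:
  assumes h: "is_history e h" "e c h" and "e y c" "e z y"
  shows "e z c"
proof -
  have "is_pot e c (\<lambda>x. e x c \<and> e x h)" using h unfolding is_history_def by blast
  then obtain d where d: "esub e y d" "e d c" "e d h" using \<open>e y c\<close> unfolding is_pot_def by blast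
  have "esub e d c" using history_member_subset[OF h(1,2) d(2,3)] .
  then show ?thesis using d(1) \<open>e z y\<close> unfolding esub_def by blast
qed

lemma history_member_is_level:
  assumes h: "is_history e h" "e c h"
  shows "is_level e c"
proof -
  txt \<open>The witnessing history is \<open>h \<inter> c\<close>.\<close>
  obtain k where k: "\<forall>x. e x k \<longleftrightarrow> e x h \<and> e x c"
    using separation[of "\<lambda>x. e x h" c] by blast
  have "is_history e k" unfolding is_history_def
  proof (intro allI impI)
    fix y assume "e y k"
    then have y: "e y h" "e y c" using k by auto
    have "is_pot e y (\<lambda>d. e d y \<and> e d h)" using h(1) y(1) unfolding is_history_def by blast
    moreover have "(\<lambda>d. e d y \<and> e d h) = (\<lambda>d. e d y \<and> e d k)"
      using k history_member_transitive[OF h y(2)] by blast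
    ultimately show "is_pot e y (\<lambda>d. e d y \<and> e d k)" by simp
  qed
  moreover have "is_pot e c (\<lambda>d. e d c \<and> e d h)" using h unfolding is_history_def by blast
  moreover have "(\<lambda>d. e d c \<and> e d h) = (\<lambda>d. e d k)" using k by blast
  ultimately show ?thesis unfolding is_level_def by auto
qed

lemma level_induct [consumes 1, case_names less]:
  assumes "is_level e s"
    and "\<And>s. is_level e s \<Longrightarrow> (\<And>u. is_level e u \<Longrightarrow> e u s \<Longrightarrow> Q u) \<Longrightarrow> Q s"
  shows "Q s"
  using assms(1)
proof (rule pot_induct)
  show "\<exists>A. is_pot e c A" if "is_level e c" for c using that unfolding is_level_def by blast
qed (rule assms(2))

lemma level_downward_closed:
  assumes "is_level e s" "e y s" "esub e z y"
  shows "e z s"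
proof -
  obtain h where h: "is_pot e s (\<lambda>c. e c h)" using assms(1) unfolding is_level_def by blast
  then obtain c where "esub e y c" "e c h" using assms(2) unfolding is_pot_def by blast
  then show ?thesis using h assms(3) unfolding is_pot_def esub_def by blast
qed

lemma level_transitive:
  assumes "is_level e s" "e y s" "e z y"
  shows "e z s"
proof -
  obtain h where h: "is_history e h" "is_pot e s (\<lambda>c. e c h)"
    using assms(1) unfolding is_level_def by blast
  then obtain c where c: "esub e y c" "e c h" using assms(2) unfolding is_pot_def by blast
  have "e z c" using c(1) assms(3) unfolding esub_def by blast
  moreover have "is_pot e c (\<lambda>x. e x c \<and> e x h)" using h c(2) unfolding is_history_def by blast
  ultimately obtain d where "esub e z d" "e d h" unfolding is_pot_def by blast
  then show ?thesis using h(2) unfolding is_pot_def by blast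
qed

lemma level_member_below_level:
  assumes "is_level e s" "e x s"
  shows "\<exists>u. is_level e u \<and> e u s \<and> esub e x u"
proof -
  obtain h where h: "is_history e h" "is_pot e s (\<lambda>c. e c h)"
    using assms(1) unfolding is_level_def by blast
  then obtain c where c: "esub e x c" "e c h" using assms(2) unfolding is_pot_def by blast
  have "e c s" using h(2) c(2) unfolding is_pot_def esub_def by blast
  then show ?thesis using history_member_is_level[OF h(1) c(2)] c(1) by blast
qed

lemma level_eqI:
  assumes s: "is_level e s" and t: "is_level e t"
    and same_levels: "\<And>u. is_level e u \<Longrightarrow> e u s \<longleftrightarrow> e u t"
  shows "s = t"
proof -
  have transfer: "e x t" if prems: "is_level e s" "is_level e t"
      "\<And>u. is_level e u \<Longrightarrow> e u s \<Longrightarrow> e u t" "e x s" for s t x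
  proof -
    obtain u where "is_level e u" "e u s" "esub e x u"
      using level_member_below_level[OF prems(1,4)] by blast
    then show "e x t" using prems(2,3) level_downward_closed by blast
  qed
  show ?thesis
  proof (rule extensional)
    fix x show "e x s \<longleftrightarrow> e x t"
      using transfer[of s t x] transfer[of t s x] s t same_levels by blast
  qed
qed

lemma levels_trichotomy:
  assumes "is_level e s" "is_level e t"
  shows "e s t \<or> s = t \<or> e t s"
  using assms
proof (induction s arbitrary: t rule: level_induct)
  case (less s)
  note s = \<open>is_level e s\<close> and IH_s = less.IH
  from \<open>is_level e t\<close> show ?case
  proof (induction t rule: level_induct)
    case (less t)
    show ?case
    proof (rule ccontr)
      assume neither: "\<not> (e s t \<or> s = t \<or> e t s)"
      have "e u t" if "is_level e u" "e u s" for u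
        using IH_s[OF that \<open>is_level e t\<close>] neither that(2) level_transitive[OF s that(2)] by blast
      moreover have "e u s" if "is_level e u" "e u t" for u
        using less.IH[OF that] neither that(2) level_transitive[OF \<open>is_level e t\<close> that(2)] by blast
      ultimately have "s = t" using level_eqI[OF s \<open>is_level e t\<close>] by blast
      then show False using neither by blast
    qed
  qed
qed

end

inductive bisim :: "('a \<Rightarrow> 'a \<Rightarrow> bool) \<Rightarrow> ('b \<Rightarrow> 'b \<Rightarrow> bool) \<Rightarrow> 'a \<Rightarrow> 'b \<Rightarrow> bool"
  for e1 e2 where
  bisimI: "(\<forall>x. e1 x v \<longrightarrow> (\<exists>z. e2 z y \<and> bisim e1 e2 x z)) \<Longrightarrow>
    (\<forall>z. e2 z y \<longrightarrow> (\<exists>x. e1 x v \<and> bisim e1 e2 x z)) \<Longrightarrow> bisim e1 e2 v y"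

lemma bisim_sym: "bisim e1 e2 v y \<Longrightarrow> bisim e2 e1 y v"
  by (induction rule: bisim.induct) (auto intro!: bisim.intros)

lemma bisimD1: "bisim e1 e2 v y \<Longrightarrow> e1 x v \<Longrightarrow> \<exists>z. e2 z y \<and> bisim e1 e2 x z"
  by (auto elim: bisim.cases)

lemma bisimD2: "bisim e1 e2 v y \<Longrightarrow> e2 z y \<Longrightarrow> \<exists>x. e1 x v \<and> bisim e1 e2 x z"
  by (auto elim: bisim.cases)

locale level_theory_pair = L1: level_theory e1 + L2: level_theory e2
  for e1 e2 :: "'a \<Rightarrow> 'a \<Rightarrow> bool"
begin

lemma swap: "level_theory_pair e2 e1"
  by (simp add: level_theory_pair_def L1.level_theory_axioms L2.level_theory_axioms)

lemma bisim_right_unique: "bisim e1 e2 v y \<Longrightarrow> bisim e1 e2 v y' \<Longrightarrow> y = y'"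
proof (induction arbitrary: y' rule: bisim.induct)
  case (bisimI v y)
  show ?case
  proof (rule L2.extensional)
    fix z show "e2 z y \<longleftrightarrow> e2 z y'"
    proof
      assume "e2 z y"
      then obtain x where x: "e1 x v" "\<forall>z'. bisim e1 e2 x z' \<longrightarrow> z = z'"
        using bisimI(2) by blast
      then show "e2 z y'" using bisimD1[OF bisimI(3)] by blast
    next
      assume "e2 z y'"
      then obtain x where "e1 x v" "bisim e1 e2 x z" using bisimD2[OF bisimI(3)] by blast
      then show "e2 z y" using bisimI(1) by blast
    qed
  qed
qed

lemma bisim_left_unique: "bisim e1 e2 v y \<Longrightarrow> bisim e1 e2 v' y \<Longrightarrow> v = v'"
  using level_theory_pair.bisim_right_unique[OF swap bisim_sym bisim_sym] .

lemma bisim_eps_iff: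
  assumes "bisim e1 e2 v y" "bisim e1 e2 x z"
  shows "e1 v x \<longleftrightarrow> e2 y z"
proof
  assume "e1 v x"
  then obtain w where "e2 w z" "bisim e1 e2 v w" using bisimD1[OF assms(2)] by blast
  then show "e2 y z" using bisim_right_unique assms(1) by blast
next
  assume "e2 y z"
  then obtain w where "e1 w x" "bisim e1 e2 w y" using bisimD2[OF assms(2)] by blast
  then show "e1 v x" using bisim_left_unique assms(1) by blast
qed

lemma bisim_esub_ex:
  assumes "bisim e1 e2 s t" "esub e1 v s"
  shows "\<exists>y. bisim e1 e2 v y \<and> esub e2 y t"
proof -
  obtain b where b: "\<forall>z. e2 z b \<longleftrightarrow> (\<exists>x. e1 x v \<and> bisim e1 e2 x z) \<and> e2 z t"
    using L2.separation[of "\<lambda>z. \<exists>x. e1 x v \<and> bisim e1 e2 x z" t] by blast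
  have "bisim e1 e2 v b"
  proof (rule bisimI)
    show "\<forall>x. e1 x v \<longrightarrow> (\<exists>z. e2 z b \<and> bisim e1 e2 x z)"
      using assms bisimD1 b unfolding esub_def by metis
    show "\<forall>z. e2 z b \<longrightarrow> (\<exists>x. e1 x v \<and> bisim e1 e2 x z)" using b by blast
  qed
  moreover have "esub e2 b t" using b unfolding esub_def by blast
  ultimately show ?thesis by blast
qed

lemma bisim_esub:
  assumes "bisim e1 e2 x y" "bisim e1 e2 c d" "esub e1 x c"
  shows "esub e2 y d"
  unfolding esub_def
proof (intro allI impI)
  fix w assume "e2 w y"
  then obtain u where "e1 u x" "bisim e1 e2 u w" using bisimD2[OF assms(1)] by blast
  then show "e2 w d" using assms(3) bisim_eps_iff[OF _ assms(2)] unfolding esub_def by blast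
qed

lemma bisim_is_pot:
  assumes "bisim e1 e2 a a'"
    and AB: "\<And>c c'. bisim e1 e2 c c' \<Longrightarrow> A c \<longleftrightarrow> B c'"
    and A_matched: "\<And>c. A c \<Longrightarrow> \<exists>c'. bisim e1 e2 c c'"
    and B_matched: "\<And>c'. B c' \<Longrightarrow> \<exists>c. bisim e1 e2 c c'"
    and pot: "is_pot e1 a A"
  shows "is_pot e2 a' B"
  unfolding is_pot_def
proof (intro allI iffI)
  fix y assume "e2 y a'"
  then obtain x where x: "e1 x a" "bisim e1 e2 x y" using bisimD2[OF assms(1)] by blast
  then obtain c where c: "esub e1 x c" "A c" using pot unfolding is_pot_def by blast
  then obtain c' where c': "bisim e1 e2 c c'" using A_matched by blast
  then show "\<exists>c. esub e2 y c \<and> B c" using bisim_esub[OF x(2) c' c(1)] AB c(2) by blast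
next
  fix y assume "\<exists>c. esub e2 y c \<and> B c"
  then obtain c' where c': "esub e2 y c'" "B c'" by blast
  then obtain c where c: "bisim e1 e2 c c'" using B_matched by blast
  then obtain x where x: "bisim e2 e1 y x" "esub e1 x c"
    using level_theory_pair.bisim_esub_ex[OF swap bisim_sym[OF c] c'(1)] by blast
  have "e1 x a" using pot x(2) AB[OF c] c'(2) unfolding is_pot_def by blast
  then obtain z where "e2 z a'" "bisim e1 e2 x z" using bisimD1[OF assms(1)] by blast
  then show "e2 y a'" using bisim_right_unique bisim_sym[OF x(1)] by blast
qed

lemma bisim_is_level:
  assumes "bisim e1 e2 s t" "is_level e1 s"
  shows "is_level e2 t"
proof -
  obtain h where h: "is_history e1 h" "is_pot e1 s (\<lambda>c. e1 c h)"
    using assms(2) unfolding is_level_def by blast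
  txt \<open>Replacing \<open>h\<close> by \<open>h \<inter> s\<close> makes the history a subset of \<open>s\<close>, so it has a partner \<open>k\<close>.\<close>
  obtain h' where h': "\<forall>x. e1 x h' \<longleftrightarrow> e1 x h \<and> e1 x s"
    using L1.separation[of "\<lambda>x. e1 x h" s] by blast
  have "e1 c h \<Longrightarrow> e1 c s" for c using h(2) unfolding is_pot_def esub_def by blast
  then have same: "e1 x h' \<longleftrightarrow> e1 x h" for x using h' by blast
  have hist: "is_history e1 h'" using h(1) same unfolding is_history_def by simp
  have pot_s: "is_pot e1 s (\<lambda>c. e1 c h')" using h(2) same by simp
  have "esub e1 h' s" using h' unfolding esub_def by blast
  then obtain k where k: "bisim e1 e2 h' k" using bisim_esub_ex[OF assms(1)] by blast
  have k_matched: "e1 c h' \<Longrightarrow> \<exists>c'. bisim e1 e2 c c'" "e2 c' k \<Longrightarrow> \<exists>c. bisim e1 e2 c c'" for c c'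
    using bisimD1[OF k] bisimD2[OF k] by blast+
  have "is_pot e2 t (\<lambda>c. e2 c k)"
    by (rule bisim_is_pot[OF assms(1) _ _ _ pot_s]) (use bisim_eps_iff k k_matched in blast)+
  moreover have "is_history e2 k" unfolding is_history_def
  proof (intro allI impI)
    fix x' assume "e2 x' k"
    then obtain x where x: "e1 x h'" "bisim e1 e2 x x'" using bisimD2[OF k] by blast
    have "is_pot e1 x (\<lambda>c. e1 c x \<and> e1 c h')" using hist x(1) unfolding is_history_def by blast
    then show "is_pot e2 x' (\<lambda>c. e2 c x' \<and> e2 c k)"
      by (rule bisim_is_pot[OF x(2), rotated 3]) (use bisim_eps_iff k x(2) k_matched in blast)+
  qed
  ultimately show ?thesis unfolding is_level_def by blast
qed

lemma bisim_into_unmatched_level: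
  assumes s2: "is_level e2 s2" and unmatched: "\<nexists>v. bisim e1 e2 v s2"
    and u: "is_level e1 u" "bisim e1 e2 u u'" and "esub e1 x u"
  shows "\<exists>z. e2 z s2 \<and> bisim e1 e2 x z"
proof -
  have "is_level e2 u'" using bisim_is_level[OF u(2,1)] .
  then have "e2 u' s2 \<or> u' = s2 \<or> e2 s2 u'" using L2.levels_trichotomy s2 by blast
  moreover have "\<not> e2 s2 u'" using bisimD2[OF u(2)] unmatched by blast
  ultimately have "e2 u' s2" using unmatched u(2) by blast
  obtain z where z: "bisim e1 e2 x z" "esub e2 z u'" using bisim_esub_ex[OF u(2) \<open>esub e1 x u\<close>] by blast
  then show ?thesis using L2.level_downward_closed[OF s2 \<open>e2 u' s2\<close>] by blast
qed

lemma minimal_unmatched_level: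
  assumes "\<nexists>y. bisim e1 e2 v y"
  shows "\<exists>s. is_level e1 s \<and> (\<nexists>y. bisim e1 e2 s y) \<and>
           (\<forall>u. is_level e1 u \<and> e1 u s \<longrightarrow> (\<exists>u'. bisim e1 e2 u u'))"
proof -
  obtain s where s: "is_level e1 s" "esub e1 v s" using L1.below_level by blast
  have "\<nexists>y. bisim e1 e2 s y" using bisim_esub_ex s(2) assms by blast
  then show ?thesis
    using L1.pot_minimal[of "\<lambda>s. is_level e1 s \<and> (\<nexists>y. bisim e1 e2 s y)" s] s(1)
    unfolding is_level_def by blast
qed

lemma bisim_domain_or_range_total:
  "(\<forall>v. \<exists>y. bisim e1 e2 v y) \<or> (\<forall>y. \<exists>v. bisim e1 e2 v y)"
proof (rule ccontr)
  assume "\<not> ?thesis"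
  then obtain v y where v: "\<nexists>y'. bisim e1 e2 v y'" and y: "\<nexists>v'. bisim e2 e1 y v'"
    by (blast dest: bisim_sym)
  obtain s1 where
    s1: "is_level e1 s1" "\<nexists>y. bisim e1 e2 s1 y"
      "\<forall>u. is_level e1 u \<and> e1 u s1 \<longrightarrow> (\<exists>u'. bisim e1 e2 u u')"
    using minimal_unmatched_level[OF v] by blast
  obtain s2 where
    s2: "is_level e2 s2" "\<nexists>v. bisim e2 e1 s2 v"
      "\<forall>u. is_level e2 u \<and> e2 u s2 \<longrightarrow> (\<exists>u'. bisim e2 e1 u u')"
    using level_theory_pair.minimal_unmatched_level[OF swap y] by blast
  have s1_unmatched: "\<nexists>y. bisim e2 e1 y s1" and s2_unmatched: "\<nexists>v. bisim e1 e2 v s2"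
    using s1(2) s2(2) by (blast dest: bisim_sym)+
  have "\<exists>z. e2 z s2 \<and> bisim e1 e2 x z" if x: "e1 x s1" for x
  proof -
    obtain u u' where "is_level e1 u" "esub e1 x u" "bisim e1 e2 u u'"
      using L1.level_member_below_level[OF s1(1) x] s1(3) by blast
    then show ?thesis
      using bisim_into_unmatched_level[OF s2(1) s2_unmatched] by blast
  qed
  moreover have "\<exists>x. e1 x s1 \<and> bisim e1 e2 x z" if z: "e2 z s2" for z
  proof -
    obtain u u' where "is_level e2 u" "esub e2 z u" "bisim e2 e1 u u'"
      using L2.level_member_below_level[OF s2(1) z] s2(3) by blast
    then obtain x where "e1 x s1" "bisim e2 e1 z x"
      using level_theory_pair.bisim_into_unmatched_level[OF swap s1(1) s1_unmatched]
      by blast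
    then show ?thesis by (blast dest: bisim_sym)
  qed
  ultimately have "bisim e1 e2 s1 s2" by (blast intro: bisimI)
  then show False using s1(2) by blast
qed

lemma bisim_domain_total_imp_range_total:
  assumes total: "\<forall>v. \<exists>y. bisim e1 e2 v y"
  shows "\<forall>y. \<exists>v. bisim e1 e2 v y"
proof (rule ccontr)
  assume "\<not> ?thesis"
  then obtain y where "\<nexists>v. bisim e2 e1 y v" by (blast dest: bisim_sym)
  then obtain s2 where s2: "is_level e2 s2" "\<nexists>v. bisim e2 e1 s2 v"
    using level_theory_pair.minimal_unmatched_level[OF swap] by blast
  then have s2_unmatched: "\<nexists>v. bisim e1 e2 v s2" by (blast dest: bisim_sym)
  have into: "\<exists>z. e2 z s2 \<and> bisim e1 e2 x z" for x
  proof -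
    obtain u where u: "is_level e1 u" "esub e1 x u" using L1.below_level by blast
    moreover obtain u' where "bisim e1 e2 u u'" using total by blast
    ultimately show ?thesis
      using bisim_into_unmatched_level[OF s2(1) s2_unmatched] by blast
  qed
  define G where "G X = (SOME b. \<forall>z. e2 z b \<longleftrightarrow> (\<exists>x\<in>X. bisim e1 e2 x z) \<and> e2 z s2)" for X
  have G: "\<forall>z. e2 z (G X) \<longleftrightarrow> (\<exists>x\<in>X. bisim e1 e2 x z) \<and> e2 z s2" for X
  proof -
    have "\<exists>b. \<forall>z. e2 z b \<longleftrightarrow> (\<exists>x\<in>X. bisim e1 e2 x z) \<and> e2 z s2"
      using L2.separation[of "\<lambda>z. \<exists>x\<in>X. bisim e1 e2 x z" s2] by blast
    then show ?thesis unfolding G_def by (rule someI_ex)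
  qed
  have G_mono: "X \<subseteq> Y" if "G X = G Y" for X Y
  proof
    fix x assume "x \<in> X"
    obtain z where z: "e2 z s2" "bisim e1 e2 x z" using into by blast
    then have "e2 z (G Y)" using G[of X] that \<open>x \<in> X\<close> by auto
    then obtain x' where "x' \<in> Y" "bisim e1 e2 x' z" using G[of Y] by blast
    then show "x \<in> Y" using bisim_left_unique z(2) by blast
  qed
  have "inj G" by (rule injI) (metis G_mono subset_antisym)
  then show False using not_inj_set_to_elem by blast
qed

lemma bisim_total:
  "(\<forall>v. \<exists>y. bisim e1 e2 v y) \<and> (\<forall>y. \<exists>v. bisim e1 e2 v y)"
proof -
  have "\<forall>v. \<exists>y. bisim e1 e2 v y" if "\<forall>y. \<exists>v. bisim e1 e2 v y"
  proof -
    have "\<forall>v. \<exists>y. bisim e2 e1 v y" using that by (blast dest: bisim_sym)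
    then have "\<forall>y. \<exists>v. bisim e2 e1 v y"
      by (rule level_theory_pair.bisim_domain_total_imp_range_total[OF swap])
    then show ?thesis by (blast dest: bisim_sym)
  qed
  then show ?thesis using bisim_domain_or_range_total bisim_domain_total_imp_range_total by blast
qed

end

lemma LT_imp_level_theory:
  assumes "LT P e" and P: "\<And>x. P x"
  shows "level_theory e"
proof -
  from \<open>LT P e\<close> have
    "\<forall>a b. P a \<and> P b \<and> (\<forall>x. e x a \<longleftrightarrow> e x b) \<longrightarrow> a = b"
    "\<forall>F a. P a \<longrightarrow> (\<exists>b. P b \<and> (\<forall>x. e x b \<longleftrightarrow> F x \<and> e x a))"
    "\<forall>a. P a \<longrightarrow> (\<exists>s. is_level e s \<and> esub e a s)"
    unfolding LT_def by blast+
  then show ?thesis by unfold_locales (simp_all add: P)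
qed

theorem theorem25:
  fixes P1 P2 :: "'a \<Rightarrow> bool" and eps1 eps2 :: "'a \<Rightarrow> 'a \<Rightarrow> bool"
  shows "(LT P1 eps1 \<and> Sigma_pred P1 \<and> LT P2 eps2 \<and> Sigma_pred P2) \<longrightarrow>
    (\<exists>R :: 'a \<Rightarrow> 'a \<Rightarrow> bool.
       (\<forall>v y. R v y \<longrightarrow> P1 v \<and> P2 y) \<and>
       (\<forall>v. P1 v \<longrightarrow> (\<exists>!y. R v y)) \<and>
       (\<forall>y. P2 y \<longrightarrow> (\<exists>!v. R v y)) \<and>
       (\<forall>v y x z. R v y \<and> R x z \<longrightarrow> (eps1 v x \<longleftrightarrow> eps2 y z)))"
proof (intro impI, elim conjE)
  assume LT1: "LT P1 eps1" and LT2: "LT P2 eps2"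
    and Sigma1: "Sigma_pred P1" and Sigma2: "Sigma_pred P2"
  have P1: "P1 x" and P2: "P2 x" for x
    using LT_Sigma_pred_universal[OF LT1 Sigma1] LT_Sigma_pred_universal[OF LT2 Sigma2] .
  interpret level_theory_pair eps1 eps2
    unfolding level_theory_pair_def
    using LT_imp_level_theory[OF LT1 P1] LT_imp_level_theory[OF LT2 P2] by blast
  show "\<exists>R. (\<forall>v y. R v y \<longrightarrow> P1 v \<and> P2 y) \<and> (\<forall>v. P1 v \<longrightarrow> (\<exists>!y. R v y)) \<and>
      (\<forall>y. P2 y \<longrightarrow> (\<exists>!v. R v y)) \<and> (\<forall>v y x z. R v y \<and> R x z \<longrightarrow> (eps1 v x \<longleftrightarrow> eps2 y z))"
  proof (intro exI conjI)
    show "\<forall>v y. bisim eps1 eps2 v y \<longrightarrow> P1 v \<and> P2 y" using P1 P2 by blast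
    show "\<forall>v. P1 v \<longrightarrow> (\<exists>!y. bisim eps1 eps2 v y)" using bisim_total bisim_right_unique by blast
    show "\<forall>y. P2 y \<longrightarrow> (\<exists>!v. bisim eps1 eps2 v y)" using bisim_total bisim_left_unique by blast
    show "\<forall>v y x z. bisim eps1 eps2 v y \<and> bisim eps1 eps2 x z \<longrightarrow> (eps1 v x \<longleftrightarrow> eps2 y z)"
      using bisim_eps_iff by blast
  qed
qed

end
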